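(* Let $\delta$ be a regular uncountable cardinal and assume the $\delta$-partial global square principle holds. Then $\pitchfork_{\lambda,\delta}$ holds for every cardinal $\lambda>\delta$.
   Context: Work in ZFC. For a set of ordinals $C$, $\mathrm{acc}(C)=\{\alpha\in C:\alpha=\sup(C\cap\alpha)\}$. $S^{On}_\delta$ is the class of ordinals of cofinality $\delta$. The $\delta$-partial global square (for regular $\delta$) means: there are a class $S\supseteq S^{On}_\delta$ of limit ordinals and a sequence $\langle C_\alpha:\alpha\in S,\alpha>\delta\rangle$ such that each $C_\alpha$ is a club subset of $\alpha$, $\mathrm{otp}(C_\alpha)<\alpha$, $\mathrm{acc}(C_\alpha)\subseteq S$, and $C_\alpha\cap\beta=C_\beta$ whenever $\beta\in\mathrm{acc}(C_\alpha)$. Quilshon: for regular $\delta<\lambda$, $\pitchfork_{\lambda,\delta}$ holds iff there is a family $\{S_\gamma:\gamma<\delta\}$ of pairwise disjoint subsets of $\lambda$ such that for every ordinal $\eta<\lambda$ with $\mathrm{cf}(\eta)=\delta$ and every $\gamma<\delta$, $S_\gamma\cap\eta$ is stationary in $\eta$. *)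

theory Defs
  imports Main "HOL-Library.Equipollence" "HOL-Library.Countable_Set"
begin

text \<open>Ordinals are modelled as the elements of an arbitrary well-ordered type 'a
(an initial segment of the ordinals); the ordinal alpha is identified with the set
of its predecessors, lessThan alpha.\<close>

definition limit_ord :: "'a::wellorder \<Rightarrow> bool" where
  "limit_ord \<alpha> \<longleftrightarrow> (\<exists>\<beta>. \<beta> < \<alpha>) \<and> (\<forall>\<beta><\<alpha>. \<exists>\<gamma>. \<beta> < \<gamma> \<and> \<gamma> < \<alpha>)"

definition otp_eq :: "'a::wellorder set \<Rightarrow> 'a \<Rightarrow> bool" where
  "otp_eq A \<gamma> \<longleftrightarrow> (\<exists>f. bij_betw f A {..<\<gamma>} \<and> strict_mono_on A f)"

definition otp_less :: "'a::wellorder set \<Rightarrow> 'a \<Rightarrow> bool" where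
  "otp_less A \<alpha> \<longleftrightarrow> (\<exists>\<gamma><\<alpha>. otp_eq A \<gamma>)"

definition cofinal_in :: "'a::wellorder set \<Rightarrow> 'a \<Rightarrow> bool" where
  "cofinal_in A \<eta> \<longleftrightarrow> A \<subseteq> {..<\<eta>} \<and> (\<forall>\<beta><\<eta>. \<exists>a\<in>A. \<beta> \<le> a)"

definition cof_eq :: "'a::wellorder \<Rightarrow> 'a \<Rightarrow> bool" where
  "cof_eq \<eta> \<delta> \<longleftrightarrow> (\<exists>A. cofinal_in A \<eta> \<and> otp_eq A \<delta>) \<and>
                    (\<forall>\<gamma><\<delta>. \<not> (\<exists>A. cofinal_in A \<eta> \<and> otp_eq A \<gamma>))"

definition is_cardinal :: "'a::wellorder \<Rightarrow> bool" where
  "is_cardinal \<kappa> \<longleftrightarrow> (\<forall>\<beta><\<kappa>. \<not> ({..<\<beta>} \<approx> {..<\<kappa>}))"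

definition regular_uncountable_cardinal :: "'a::wellorder \<Rightarrow> bool" where
  "regular_uncountable_cardinal \<delta> \<longleftrightarrow>
     is_cardinal \<delta> \<and> uncountable {..<\<delta>} \<and> cof_eq \<delta> \<delta>"

definition acc :: "'a::wellorder set \<Rightarrow> 'a set" where
  "acc C = {\<beta>\<in>C. \<forall>\<gamma><\<beta>. \<exists>c\<in>C. \<gamma> < c \<and> c < \<beta>}"

definition club_in :: "'a::wellorder set \<Rightarrow> 'a \<Rightarrow> bool" where
  "club_in C \<alpha> \<longleftrightarrow> C \<subseteq> {..<\<alpha>} \<and> (\<forall>\<gamma><\<alpha>. \<exists>c\<in>C. \<gamma> < c) \<and>
     (\<forall>\<beta><\<alpha>. (\<exists>c\<in>C. c < \<beta>) \<and> (\<forall>\<gamma><\<beta>. \<exists>c\<in>C. \<gamma> < c \<and> c < \<beta>) \<longrightarrow> \<beta> \<in> C)"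

definition stationary_in :: "'a::wellorder set \<Rightarrow> 'a \<Rightarrow> bool" where
  "stationary_in T \<eta> \<longleftrightarrow> (\<forall>C. club_in C \<eta> \<longrightarrow> T \<inter> C \<noteq> {})"

definition partial_global_square :: "'a::wellorder \<Rightarrow> bool" where
  "partial_global_square \<delta> \<longleftrightarrow>
    (\<exists>(S::'a set) (C::'a \<Rightarrow> 'a set).
       (\<forall>\<alpha>. cof_eq \<alpha> \<delta> \<longrightarrow> \<alpha> \<in> S) \<and>
       (\<forall>\<alpha>\<in>S. limit_ord \<alpha>) \<and>
       (\<forall>\<alpha>\<in>S. \<delta> < \<alpha> \<longrightarrow>
          club_in (C \<alpha>) \<alpha> \<and> otp_less (C \<alpha>) \<alpha> \<and> acc (C \<alpha>) \<subseteq> S \<and>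
          (\<forall>\<beta>\<in>acc (C \<alpha>). \<delta> < \<beta> \<longrightarrow> C \<alpha> \<inter> {..<\<beta>} = C \<beta>)))"

definition pitchfork :: "'a::wellorder \<Rightarrow> 'a \<Rightarrow> bool" where
  "pitchfork \<mu> \<delta> \<longleftrightarrow>
    (\<exists>S::'a \<Rightarrow> 'a set.
       (\<forall>\<gamma><\<delta>. S \<gamma> \<subseteq> {..<\<mu>}) \<and>
       (\<forall>\<gamma><\<delta>. \<forall>\<gamma>'<\<delta>. \<gamma> \<noteq> \<gamma>' \<longrightarrow> S \<gamma> \<inter> S \<gamma>' = {}) \<and>
       (\<forall>\<eta><\<mu>. cof_eq \<eta> \<delta> \<longrightarrow> (\<forall>\<gamma><\<delta>. stationary_in (S \<gamma> \<inter> {..<\<eta>}) \<eta>)))"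

end

theory Submission
  imports Defs
begin

text \<open>By Solovay's theorem the regular cardinal \<open>\<delta>\<close> carries a colouring \<open>P\<close> with \<open>\<delta>\<close> colours,
  each of whose colour classes is stationary in \<open>\<delta>\<close>. The square sequence propagates \<open>P\<close> to one global
  colouring \<open>g\<close>: a point \<open>\<beta> > \<delta>\<close> gets the colour of the order type of its club \<open>C\<^sub>\<beta>\<close>. If \<open>\<eta>\<close> has
  cofinality \<open>\<delta>\<close>, the collapse of \<open>C\<^sub>\<eta>\<close> onto its order type \<open>\<epsilon> < \<eta>\<close> preserves cofinality, and by coherence
  every accumulation point \<open>\<beta> > \<delta>\<close> of \<open>C\<^sub>\<eta>\<close> has the colour of its image in \<open>\<epsilon>\<close>. Since \<open>\<eta>\<close> has
  uncountable cofinality, the collapse maps the trace of any club of \<open>\<eta>\<close> on the accumulation points of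
  \<open>C\<^sub>\<eta>\<close> onto a club of \<open>\<epsilon>\<close>, so by induction on \<open>\<eta>\<close> every colour class of \<open>g\<close> is stationary in
  \<open>\<eta>\<close>. The colour classes of \<open>g\<close> below \<open>\<mu>\<close> then witness the principle.\<close>

subsection \<open>Order types\<close>

lemma strict_mono_on_lessThan_ge_self:
  fixes \<phi> :: "'a::wellorder \<Rightarrow> 'a"
  assumes sm: "strict_mono_on {..<\<tau>} \<phi>" and "x < \<tau>"
  shows "x \<le> \<phi> x"
  using \<open>x < \<tau>\<close>
proof (induction x rule: less_induct)
  case (less x)
  show ?case
  proof (rule ccontr)
    assume "\<not> x \<le> \<phi> x"
    hence "\<phi> x < x" by simp
    moreover from this less.prems have "\<phi> x < \<tau>" by simp
    ultimately have "\<phi> x \<le> \<phi> (\<phi> x)" and "\<phi> (\<phi> x) < \<phi> x"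
      using less sm by (auto simp: strict_mono_on_def)
    thus False by simp
  qed
qed

lemma strict_mono_on_lessThan_le:
  fixes \<phi> :: "'a::wellorder \<Rightarrow> 'a"
  assumes "strict_mono_on {..<\<tau>} \<phi>" "\<phi> ` {..<\<tau>} \<subseteq> {..<\<delta>}"
  shows "\<tau> \<le> \<delta>"
proof (rule ccontr)
  assume "\<not> \<tau> \<le> \<delta>"
  hence "\<delta> \<in> {..<\<tau>}" by simp
  hence "\<delta> \<le> \<phi> \<delta>" and "\<phi> \<delta> < \<delta>"
    using strict_mono_on_lessThan_ge_self[OF assms(1)] assms(2) by auto
  thus False by simp
qed

lemma strict_mono_on_inv_into:
  fixes f :: "'a::linorder \<Rightarrow> 'b::linorder"
  assumes "bij_betw f A B" "strict_mono_on A f"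
  shows "strict_mono_on B (inv_into A f)"
proof (rule strict_mono_onI)
  fix r s assume rs: "r \<in> B" "s \<in> B" "r < s"
  have "inv_into A f r \<in> A" "inv_into A f s \<in> A"
    using bij_betw_inv_into[OF assms(1)] rs by (auto simp: bij_betw_def)
  moreover have "f (inv_into A f r) < f (inv_into A f s)"
    using assms(1) rs by (auto simp: bij_betw_def f_inv_into_f)
  ultimately show "inv_into A f r < inv_into A f s"
    using strict_mono_on_less[OF assms(2)] by blast
qed

lemma otp_eq_le_if_strict_mono_into:
  fixes A B :: "'a::wellorder set"
  assumes g: "strict_mono_on A g" "g ` A \<subseteq> B" and "otp_eq A \<tau>" "otp_eq B \<delta>"
  shows "\<tau> \<le> \<delta>"
proof -
  obtain hA where hA: "bij_betw hA A {..<\<tau>}" "strict_mono_on A hA"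
    using \<open>otp_eq A \<tau>\<close> unfolding otp_eq_def by blast
  obtain hB where hB: "bij_betw hB B {..<\<delta>}" "strict_mono_on B hB"
    using \<open>otp_eq B \<delta>\<close> unfolding otp_eq_def by blast
  have inv: "strict_mono_on {..<\<tau>} (inv_into A hA)" "inv_into A hA ` {..<\<tau>} = A"
    using strict_mono_on_inv_into[OF hA] bij_betw_inv_into[OF hA(1)] by (auto simp: bij_betw_def)
  show ?thesis
  proof (rule strict_mono_on_lessThan_le)
    show "strict_mono_on {..<\<tau>} (hB \<circ> g \<circ> inv_into A hA)"
      using monotone_on_o[OF monotone_on_o[OF hB(2) g] inv(1)] inv(2) by simp
    show "(hB \<circ> g \<circ> inv_into A hA) ` {..<\<tau>} \<subseteq> {..<\<delta>}"
      using g(2) hB(1) inv(2) by (auto simp: bij_betw_def image_comp[symmetric])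
  qed
qed

lemma otp_eq_unique:
  fixes A :: "'a::wellorder set"
  assumes "otp_eq A \<gamma>" "otp_eq A \<gamma>'"
  shows "\<gamma> = \<gamma>'"
  using otp_eq_le_if_strict_mono_into[of A id A, OF strict_mono_on_id _ assms]
    otp_eq_le_if_strict_mono_into[of A id A, OF strict_mono_on_id _ assms(2,1)]
  by simp

definition collapse :: "'a::wellorder set \<Rightarrow> 'a \<Rightarrow> 'a" where
  "collapse A = wfrec {(x, y). x < y} (\<lambda>r a. LEAST z. \<forall>b\<in>A. b < a \<longrightarrow> r b < z)"

lemma collapse_eq: "collapse A a = (LEAST z. \<forall>b\<in>A. b < a \<longrightarrow> collapse A b < z)"
  unfolding collapse_def by (subst wfrec[OF wf]) (simp add: cut_apply)

lemma collapse_le: "collapse A a \<le> a"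
proof (induction a rule: less_induct)
  case (less a)
  hence "\<forall>b\<in>A. b < a \<longrightarrow> collapse A b < a" by (meson le_less_trans)
  thus ?case unfolding collapse_eq[of A a] by (rule Least_le)
qed

lemma collapse_less:
  assumes "b \<in> A" "b < a"
  shows "collapse A b < collapse A a"
proof -
  have "\<forall>b\<in>A. b < a \<longrightarrow> collapse A b < a" using collapse_le le_less_trans by blast
  hence "\<forall>b\<in>A. b < a \<longrightarrow> collapse A b < collapse A a"
    unfolding collapse_eq[of A a] by (rule LeastI[of _ a])
  thus ?thesis using assms by blast
qed

lemma collapse_downward_closed:
  "a \<in> A \<Longrightarrow> z < collapse A a \<Longrightarrow> \<exists>b\<in>A. b < a \<and> collapse A b = z"
proof (induction a arbitrary: z rule: less_induct)
  case (less a)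
  have "\<not> (\<forall>b\<in>A. b < a \<longrightarrow> collapse A b < z)"
    using not_less_Least less.prems(2) unfolding collapse_eq[of A a] by blast
  then obtain b where b: "b \<in> A" "b < a" "z \<le> collapse A b" by (auto simp: not_less)
  show ?case
  proof (cases "collapse A b = z")
    case False
    then obtain b' where "b' \<in> A" "b' < b" "collapse A b' = z"
      using less.IH[OF b(2,1)] b(3) by (auto simp: order.order_iff_strict)
    thus ?thesis using b(2) less_trans by blast
  qed (use b in blast)
qed

lemma otp_eq_exists:
  fixes A :: "'a::wellorder set"
  assumes "A \<subseteq> {..<x}"
  shows "\<exists>\<tau>\<le>x. otp_eq A \<tau>"
proof -
  define \<tau> where "\<tau> = (LEAST z. z \<notin> collapse A ` A)"
  have "x \<notin> collapse A ` A"
  proof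
    assume "x \<in> collapse A ` A"
    then obtain a where "a \<in> A" "x = collapse A a" by blast
    thus False using assms collapse_le[of A a] by auto
  qed
  hence "\<tau> \<le> x" and \<tau>: "\<tau> \<notin> collapse A ` A"
    unfolding \<tau>_def by (fact Least_le, fact LeastI)
  have "collapse A ` A = {..<\<tau>}"
  proof (intro equalityI subsetI)
    fix z assume "z \<in> collapse A ` A"
    then obtain a where a: "a \<in> A" "z = collapse A a" by blast
    show "z \<in> {..<\<tau>}"
    proof (rule ccontr)
      assume "z \<notin> {..<\<tau>}"
      hence "\<tau> < collapse A a" using \<tau> a by (auto simp: not_less order.order_iff_strict)
      thus False using \<tau> collapse_downward_closed[OF a(1)] by blast
    qed
  next
    fix z assume "z \<in> {..<\<tau>}"
    thus "z \<in> collapse A ` A" unfolding \<tau>_def using not_less_Least by auto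
  qed
  moreover have "strict_mono_on A (collapse A)" by (auto intro: strict_mono_onI collapse_less)
  moreover from calculation(2) have "inj_on (collapse A) A" by (rule strict_mono_on_imp_inj_on)
  ultimately show ?thesis
    using \<open>\<tau> \<le> x\<close> unfolding otp_eq_def bij_betw_def by blast
qed

lemma otp_eq_strict_mono_image:
  fixes A :: "'a::wellorder set"
  assumes g: "strict_mono_on A g" and "otp_eq A \<gamma>"
  shows "otp_eq (g ` A) \<gamma>"
proof -
  obtain h where h: "bij_betw h A {..<\<gamma>}" "strict_mono_on A h"
    using \<open>otp_eq A \<gamma>\<close> unfolding otp_eq_def by blast
  have gA: "bij_betw g A (g ` A)" using strict_mono_on_imp_inj_on[OF g] by (simp add: bij_betw_def)
  have "bij_betw (h \<circ> inv_into A g) (g ` A) {..<\<gamma>}"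
    using bij_betw_trans[OF bij_betw_inv_into[OF gA] h(1)] .
  moreover have "strict_mono_on (g ` A) (h \<circ> inv_into A g)"
    using monotone_on_o[OF h(2) strict_mono_on_inv_into[OF gA g]] bij_betw_inv_into[OF gA]
    by (simp add: bij_betw_def)
  ultimately show ?thesis unfolding otp_eq_def by blast
qed

lemma otp_eq_initial_segment:
  fixes f :: "'a::wellorder \<Rightarrow> 'a"
  assumes f: "bij_betw f C {..<\<epsilon>}" "strict_mono_on C f" and "c \<in> C"
  shows "otp_eq (C \<inter> {..<c}) (f c)"
  unfolding otp_eq_def
proof (intro exI conjI)
  show "strict_mono_on (C \<inter> {..<c}) f" using f(2) by (rule monotone_on_subset) auto
  have "f ` (C \<inter> {..<c}) = {..<f c}"
  proof (intro equalityI subsetI)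
    fix z assume z: "z \<in> {..<f c}"
    moreover have "f c < \<epsilon>" using f(1) \<open>c \<in> C\<close> by (auto simp: bij_betw_def)
    ultimately have "z \<in> f ` C" using f(1) by (simp add: bij_betw_def)
    then obtain c' where c': "c' \<in> C" "z = f c'" by blast
    hence "c' < c" using z strict_mono_on_less[OF f(2) c'(1) \<open>c \<in> C\<close>] by simp
    thus "z \<in> f ` (C \<inter> {..<c})" using c' by blast
  next
    fix z assume "z \<in> f ` (C \<inter> {..<c})"
    thus "z \<in> {..<f c}" using strict_mono_on_less[OF f(2) _ \<open>c \<in> C\<close>] by auto
  qed
  moreover have "inj_on f (C \<inter> {..<c})" using f(1) by (auto simp: bij_betw_def intro: inj_on_subset)
  ultimately show "bij_betw f (C \<inter> {..<c}) {..<f c}" by (simp add: bij_betw_def)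
qed

lemma otp_eq_mono_image_le:
  fixes k :: "'a::wellorder \<Rightarrow> 'a"
  assumes k: "mono_on B k" and "otp_eq B \<delta>" "otp_eq (k ` B) \<tau>"
  shows "\<tau> \<le> \<delta>"
proof -
  define l where "l a = (LEAST b. b \<in> B \<and> k b = a)" for a
  have l: "l a \<in> B \<and> k (l a) = a" if a: "a \<in> k ` B" for a
  proof -
    obtain b where "b \<in> B \<and> k b = a" using a by blast
    thus ?thesis unfolding l_def by (rule LeastI)
  qed
  have "strict_mono_on (k ` B) l"
  proof (rule strict_mono_onI)
    fix a a' assume "a \<in> k ` B" "a' \<in> k ` B" "a < a'"
    thus "l a < l a'" using l mono_onD[OF k] by (metis leD not_le_imp_less)
  qed
  thus ?thesis using otp_eq_le_if_strict_mono_into assms(2,3) l by blast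
qed

subsection \<open>Cofinality\<close>

lemma cof_eq_le_otp:
  assumes "cof_eq \<eta> \<delta>" "cofinal_in A \<eta>" "otp_eq A \<tau>"
  shows "\<delta> \<le> \<tau>"
  using assms unfolding cof_eq_def by (meson not_le)

lemma cof_eq_le:
  fixes \<eta> :: "'a::wellorder"
  assumes "cof_eq \<eta> \<delta>"
  shows "\<delta> \<le> \<eta>"
proof (rule cof_eq_le_otp[OF assms])
  show "cofinal_in {..<\<eta>} \<eta>" unfolding cofinal_in_def by auto
  show "otp_eq {..<\<eta>} \<eta>" unfolding otp_eq_def using bij_betw_id strict_mono_on_id by blast
qed

lemma cof_eq_self_otp_eq:
  fixes \<delta> :: "'a::wellorder"
  assumes "cof_eq \<delta> \<delta>" "cofinal_in N \<delta>"
  shows "otp_eq N \<delta>"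
proof -
  obtain \<tau> where "\<tau> \<le> \<delta>" "otp_eq N \<tau>"
    using otp_eq_exists assms(2) unfolding cofinal_in_def by blast
  moreover from this have "\<delta> \<le> \<tau>" using cof_eq_le_otp assms by blast
  ultimately show ?thesis by simp
qed

definition uncountable_cof :: "'a::wellorder \<Rightarrow> bool" where
  "uncountable_cof \<eta> \<longleftrightarrow> (\<forall>A. countable A \<and> A \<subseteq> {..<\<eta>} \<longrightarrow> (\<exists>\<beta><\<eta>. \<forall>a\<in>A. a < \<beta>))"

lemma cof_eq_uncountable_cof:
  fixes \<eta> :: "'a::wellorder"
  assumes "cof_eq \<eta> \<delta>" "uncountable {..<\<delta>}"
  shows "uncountable_cof \<eta>"
  unfolding uncountable_cof_def
proof (intro allI impI)
  fix A assume A: "countable A \<and> A \<subseteq> {..<\<eta>}"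
  show "\<exists>\<beta><\<eta>. \<forall>a\<in>A. a < \<beta>"
  proof (rule ccontr)
    assume "\<not> ?thesis"
    hence "cofinal_in A \<eta>" using A unfolding cofinal_in_def by (meson not_le)
    moreover obtain \<tau> f where "otp_eq A \<tau>" "bij_betw f A {..<\<tau>}"
      using otp_eq_exists A unfolding otp_eq_def by blast
    ultimately have "{..<\<delta>} \<subseteq> {..<\<tau>}" and "countable {..<\<tau>}"
      using cof_eq_le_otp[OF assms(1)] A countable_image[of A f] by (auto simp: bij_betw_def)
    thus False using assms(2) countable_subset by blast
  qed
qed

lemma uncountable_cof_unbounded:
  fixes \<eta> :: "'a::wellorder"
  assumes "uncountable_cof \<eta>" "x < \<eta>"
  shows "\<exists>y<\<eta>. x < y"
  using assms(1)[unfolded uncountable_cof_def, rule_format, of "{x}"] assms(2) by auto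

lemma regular_uncountable_cardinal_uncountable_cof:
  "regular_uncountable_cardinal \<delta> \<Longrightarrow> uncountable_cof \<delta>"
  unfolding regular_uncountable_cardinal_def using cof_eq_uncountable_cof[of \<delta> \<delta>] by simp

lemma regular_cardinal_bounded_image:
  fixes \<delta> :: "'a::wellorder"
  assumes "is_cardinal \<delta>" "cof_eq \<delta> \<delta>" "\<nu> < \<delta>" "h ` {..<\<nu>} \<subseteq> {..<\<delta>}"
  shows "\<exists>\<beta><\<delta>. \<forall>\<xi><\<nu>. h \<xi> < \<beta>"
proof (rule ccontr)
  assume "\<not> ?thesis"
  hence "cofinal_in (h ` {..<\<nu>}) \<delta>"
    using assms(4) unfolding cofinal_in_def by (meson image_eqI lessThan_iff not_le)
  then obtain f where "bij_betw f (h ` {..<\<nu>}) {..<\<delta>}"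
    using cof_eq_self_otp_eq[OF assms(2)] unfolding otp_eq_def by blast
  hence "{..<\<delta>} \<lesssim> h ` {..<\<nu>}" by (meson eqpoll_def eqpoll_imp_lepoll eqpoll_sym)
  also have "\<dots> \<lesssim> {..<\<nu>}" by (rule image_lepoll)
  finally have "{..<\<delta>} \<lesssim> {..<\<nu>}" .
  moreover have "{..<\<nu>} \<lesssim> {..<\<delta>}" using assms(3) by (intro subset_imp_lepoll) auto
  ultimately have "{..<\<nu>} \<approx> {..<\<delta>}" by (simp add: lepoll_antisym)
  thus False using assms(1,3) unfolding is_cardinal_def by blast
qed

lemma cof_eq_le_otp_collapse:
  fixes \<eta> :: "'a::wellorder" and f :: "'a \<Rightarrow> 'a"
  assumes cof: "cof_eq \<eta> \<delta>" and C: "cofinal_in C \<eta>"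
    and f: "bij_betw f C {..<\<epsilon>}" "strict_mono_on C f"
    and A: "cofinal_in A \<epsilon>" "otp_eq A \<gamma>"
  shows "\<delta> \<le> \<gamma>"
proof (rule cof_eq_le_otp[OF cof])
  define g where "g = inv_into C f"
  have g: "strict_mono_on {..<\<epsilon>} g" "g ` {..<\<epsilon>} = C"
    using strict_mono_on_inv_into[OF f] bij_betw_inv_into[OF f(1)] unfolding g_def bij_betw_def
    by auto
  have gf: "g (f c) = c" if "c \<in> C" for c
    using f(1) that unfolding g_def bij_betw_def by simp
  have A\<epsilon>: "A \<subseteq> {..<\<epsilon>}" using A(1) unfolding cofinal_in_def by blast
  show "otp_eq (g ` A) \<gamma>"
    using otp_eq_strict_mono_image[OF monotone_on_subset[OF g(1) A\<epsilon>] A(2)] .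
  show "cofinal_in (g ` A) \<eta>"
    unfolding cofinal_in_def
  proof (intro conjI allI impI)
    show "g ` A \<subseteq> {..<\<eta>}" using g(2) A\<epsilon> C unfolding cofinal_in_def by blast
    fix \<beta> assume "\<beta> < \<eta>"
    then obtain c where c: "c \<in> C" "\<beta> \<le> c" using C unfolding cofinal_in_def by blast
    hence "f c < \<epsilon>" using f(1) by (auto simp: bij_betw_def)
    then obtain a where a: "a \<in> A" "f c \<le> a" using A(1) unfolding cofinal_in_def by blast
    hence "g (f c) \<le> g a" using strict_mono_on_less_eq[OF g(1)] A\<epsilon> \<open>f c < \<epsilon>\<close> by auto
    thus "\<exists>a\<in>g ` A. \<beta> \<le> a" using a c gf by force
  qed
qed

lemma collapse_mono_cofinal_image:
  fixes f :: "'a::wellorder \<Rightarrow> 'a"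
  assumes B: "cofinal_in B \<eta>" and C: "cofinal_in C \<eta>"
    and f: "bij_betw f C {..<\<epsilon>}" "strict_mono_on C f"
  obtains k where "mono_on B k" "cofinal_in (k ` B) \<epsilon>"
proof -
  define m where "m b = (LEAST c. c \<in> C \<and> b \<le> c)" for b
  have m: "m b \<in> C \<and> b \<le> m b" if b: "b \<in> B" for b
  proof -
    obtain c where "c \<in> C \<and> b \<le> c" using b B C unfolding cofinal_in_def by blast
    thus ?thesis unfolding m_def by (rule LeastI)
  qed
  have "mono_on B (f \<circ> m)"
  proof (rule mono_onI)
    fix b b' assume "b \<in> B" "b' \<in> B" "b \<le> b'"
    hence "m b' \<in> C \<and> b \<le> m b'" using m by (meson order.trans)
    hence "m b \<le> m b'" unfolding m_def by (rule Least_le)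
    moreover have "m b \<in> C" "m b' \<in> C" using m \<open>b \<in> B\<close> \<open>b' \<in> B\<close> by auto
    ultimately show "(f \<circ> m) b \<le> (f \<circ> m) b'" using strict_mono_on_less_eq[OF f(2)] by simp
  qed
  moreover have "cofinal_in ((f \<circ> m) ` B) \<epsilon>"
    unfolding cofinal_in_def
  proof (intro conjI allI impI)
    show "(f \<circ> m) ` B \<subseteq> {..<\<epsilon>}" using m f(1) by (auto simp: bij_betw_def)
    fix z assume "z < \<epsilon>"
    hence "z \<in> f ` C" using f(1) by (simp add: bij_betw_def)
    then obtain c where c: "c \<in> C" "z = f c" by blast
    hence "c < \<eta>" using C unfolding cofinal_in_def by blast
    then obtain b where b: "b \<in> B" "c \<le> b" using B unfolding cofinal_in_def by blast
    hence "c \<le> m b" "m b \<in> C" using m by (auto intro: order.trans)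
    hence "z \<le> (f \<circ> m) b" using c strict_mono_on_less_eq[OF f(2)] by simp
    thus "\<exists>a\<in>(f \<circ> m) ` B. z \<le> a" using b by blast
  qed
  ultimately show thesis using that by blast
qed

lemma cof_eq_transfer:
  fixes \<eta> :: "'a::wellorder" and f :: "'a \<Rightarrow> 'a"
  assumes cof: "cof_eq \<eta> \<delta>" and C: "cofinal_in C \<eta>"
    and f: "bij_betw f C {..<\<epsilon>}" "strict_mono_on C f"
  shows "cof_eq \<epsilon> \<delta>"
proof -
  obtain B where B: "cofinal_in B \<eta>" "otp_eq B \<delta>" using cof unfolding cof_eq_def by blast
  obtain k where k: "mono_on B k" "cofinal_in (k ` B) \<epsilon>"
    using collapse_mono_cofinal_image[OF B(1) C f] by blast
  obtain \<tau> where \<tau>: "otp_eq (k ` B) \<tau>"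
    using otp_eq_exists[of "k ` B" \<epsilon>] k(2) unfolding cofinal_in_def by blast
  have minimal: "\<delta> \<le> \<gamma>" if "cofinal_in A \<epsilon>" "otp_eq A \<gamma>" for A \<gamma>
    using cof_eq_le_otp_collapse[OF cof C f that] .
  have "\<tau> = \<delta>" using otp_eq_mono_image_le[OF k(1) B(2) \<tau>] minimal[OF k(2) \<tau>] by simp
  thus ?thesis unfolding cof_eq_def using minimal k(2) \<tau> leD by blast
qed

subsection \<open>Clubs and stationary sets\<close>

lemma club_in_bounded: "club_in C \<eta> \<Longrightarrow> c \<in> C \<Longrightarrow> c < \<eta>"
  unfolding club_in_def by blast

lemma club_in_unbounded: "club_in C \<eta> \<Longrightarrow> y < \<eta> \<Longrightarrow> \<exists>c\<in>C. y < c"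
  unfolding club_in_def by blast

lemma club_in_closed:
  "club_in C \<eta> \<Longrightarrow> \<beta> < \<eta> \<Longrightarrow> c \<in> C \<Longrightarrow> c < \<beta> \<Longrightarrow> \<forall>\<gamma><\<beta>. \<exists>c\<in>C. \<gamma> < c \<and> c < \<beta>
    \<Longrightarrow> \<beta> \<in> C"
  unfolding club_in_def by blast

lemma club_in_cofinal_in: "club_in C \<eta> \<Longrightarrow> cofinal_in C \<eta>"
  unfolding club_in_def cofinal_in_def by (meson less_imp_le)

lemma stationary_in_mono: "stationary_in X \<eta> \<Longrightarrow> X \<subseteq> Y \<Longrightarrow> stationary_in Y \<eta>"
  unfolding stationary_in_def by blast

lemma stationary_in_nonempty:
  fixes \<eta> :: "'a::wellorder"
  assumes "uncountable_cof \<eta>" "stationary_in X \<eta>"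
  shows "\<exists>x\<in>X. x < \<eta>"
proof -
  have "club_in {..<\<eta>} \<eta>"
    using uncountable_cof_unbounded[OF assms(1)] unfolding club_in_def by auto
  thus ?thesis using assms(2) unfolding stationary_in_def by blast
qed

lemma club_in_acc_if_no_max_below:
  fixes C :: "'a::wellorder set"
  assumes C: "club_in C \<eta>" and "c \<in> C" "c0 \<in> C" "c0 < c"
    and no_max: "\<And>c'. c' \<in> C \<Longrightarrow> c' < c \<Longrightarrow> \<exists>c''\<in>C. c' < c'' \<and> c'' < c"
  shows "c \<in> acc C"
  unfolding acc_def
proof (intro CollectI conjI allI impI)
  show "c \<in> C" by fact
  fix y assume "y < c"
  show "\<exists>c'\<in>C. y < c' \<and> c' < c"
  proof (rule ccontr)
    assume "\<not> ?thesis"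
    hence ub: "\<forall>c'\<in>C. c' < c \<longrightarrow> c' \<le> y" by (meson not_le)
    define s where "s = (LEAST z. \<forall>c'\<in>C. c' < c \<longrightarrow> c' \<le> z)"
    have "s \<le> y" and s: "\<forall>c'\<in>C. c' < c \<longrightarrow> c' \<le> s"
      unfolding s_def using ub by (fact Least_le, fact LeastI)
    hence "s < c" using \<open>y < c\<close> by simp
    have "s \<in> C"
    proof (rule ccontr)
      assume "s \<notin> C"
      have "c0 < s" using s \<open>c0 \<in> C\<close> \<open>c0 < c\<close> \<open>s \<notin> C\<close> by (metis order.order_iff_strict)
      moreover have "\<forall>t<s. \<exists>c'\<in>C. t < c' \<and> c' < s"
      proof (intro allI impI)
        fix t assume "t < s"
        hence "\<not> (\<forall>c'\<in>C. c' < c \<longrightarrow> c' \<le> t)" using not_less_Least unfolding s_def by blast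
        then obtain c' where "c' \<in> C" "c' < c" "t < c'" by (meson not_le)
        moreover from this have "c' < s" using s \<open>s \<notin> C\<close> by (metis order.order_iff_strict)
        ultimately show "\<exists>c'\<in>C. t < c' \<and> c' < s" by blast
      qed
      moreover have "s < \<eta>" using \<open>s < c\<close> club_in_bounded[OF C \<open>c \<in> C\<close>] by simp
      ultimately have "s \<in> C" using club_in_closed[OF C _ \<open>c0 \<in> C\<close>] by blast
      thus False using \<open>s \<notin> C\<close> by blast
    qed
    then obtain c'' where "c'' \<in> C" "s < c''" "c'' < c" using no_max \<open>s < c\<close> by blast
    thus False using s by (meson leD)
  qed
qed

lemma uncountable_cof_chain_limit:
  fixes \<eta> x :: "'a::wellorder" and R :: "nat \<Rightarrow> 'a \<Rightarrow> 'a \<Rightarrow> bool"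
  assumes cof: "uncountable_cof \<eta>" and "x < \<eta>"
    and step: "\<And>k y. y < \<eta> \<Longrightarrow> \<exists>z<\<eta>. y < z \<and> R k y z"
  obtains \<alpha> and s :: "nat \<Rightarrow> 'a" where "\<alpha> < \<eta>" "s 0 = x" "strict_mono s"
    "\<And>k. R k (s k) (s (Suc k))" "\<And>k. s k < \<alpha>" "\<And>\<beta>. \<beta> < \<alpha> \<Longrightarrow> \<exists>k. \<beta> < s k"
proof -
  define succ where "succ k y = (SOME z. z < \<eta> \<and> y < z \<and> R k y z)" for k y
  have succ: "succ k y < \<eta> \<and> y < succ k y \<and> R k y (succ k y)" if "y < \<eta>" for k y
    unfolding succ_def using someI_ex[OF step[OF that]] by simp
  define s where "s = rec_nat x succ"
  have s_less: "s k < \<eta>" for k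
    by (induction k) (simp_all add: s_def succ \<open>x < \<eta>\<close>)
  have s_step: "s k < s (Suc k) \<and> R k (s k) (s (Suc k))" for k
    using succ[OF s_less[of k]] by (simp add: s_def)
  have "countable (range s)" "range s \<subseteq> {..<\<eta>}" using s_less by auto
  then obtain \<beta>0 where "\<beta>0 < \<eta>" "\<forall>k. s k \<le> \<beta>0"
    using cof[unfolded uncountable_cof_def, rule_format, of "range s"] by (auto dest: less_imp_le)
  define \<alpha> where "\<alpha> = (LEAST z. \<forall>k. s k \<le> z)"
  have "\<forall>k. s k \<le> \<alpha>" "\<alpha> \<le> \<beta>0"
    unfolding \<alpha>_def using \<open>\<forall>k. s k \<le> \<beta>0\<close> by (fact LeastI, fact Least_le)
  show thesis
  proof
    show "\<alpha> < \<eta>" using \<open>\<alpha> \<le> \<beta>0\<close> \<open>\<beta>0 < \<eta>\<close> by simp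
    show "s 0 = x" by (simp add: s_def)
    show "strict_mono s" using s_step by (simp add: strict_mono_Suc_iff)
    show "R k (s k) (s (Suc k))" and "s k < \<alpha>" for k
      using s_step[of k] \<open>\<forall>k. s k \<le> \<alpha>\<close> by (auto intro: less_le_trans)
    show "\<exists>k. \<beta> < s k" if "\<beta> < \<alpha>" for \<beta>
      using not_less_Least[OF that[unfolded \<alpha>_def]] by (auto simp: not_le)
  qed
qed

lemma countable_clubs_common_acc:
  fixes \<eta> x :: "'a::wellorder" and D :: "nat \<Rightarrow> 'a set"
  assumes cof: "uncountable_cof \<eta>" and D: "\<And>n. club_in (D n) \<eta>" and "x < \<eta>"
  obtains \<alpha> and s :: "nat \<Rightarrow> 'a" where "x < \<alpha>" "cofinal_in (range s) \<alpha>" "\<And>n. \<alpha> \<in> acc (D n)"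
proof -
  have step: "\<exists>z<\<eta>. y < z \<and> z \<in> D (fst (prod_decode k))" if "y < \<eta>" for k y
    using club_in_unbounded[OF D that] club_in_bounded[OF D] by blast
  obtain \<alpha> and s :: "nat \<Rightarrow> 'a" where s: "\<alpha> < \<eta>" "s 0 = x" "strict_mono s"
    "\<And>k. s (Suc k) \<in> D (fst (prod_decode k))" "\<And>k. s k < \<alpha>" "\<And>\<beta>. \<beta> < \<alpha> \<Longrightarrow> \<exists>k. \<beta> < s k"
    using uncountable_cof_chain_limit[where R = "\<lambda>k y z. z \<in> D (fst (prod_decode k))",
          OF cof \<open>x < \<eta>\<close> step] by blast
  \<comment> \<open>the chain visits \<open>D n\<close> at every index \<open>prod_encode (n, k)\<close>\<close>
  have visits: "\<exists>c\<in>D n. \<beta> < c \<and> c < \<alpha>" if \<beta>: "\<beta> < \<alpha>" for n \<beta>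
  proof -
    obtain k where "\<beta> < s k" using s(6) \<beta> by blast
    define j where "j = prod_encode (n, k)"
    have "s k \<le> s j" using s(3) le_prod_encode_2[of k n] unfolding j_def by (simp add: strict_mono_less_eq)
    also have "s j < s (Suc j)" using s(3) by (simp add: strict_mono_less)
    finally have "\<beta> < s (Suc j)" using \<open>\<beta> < s k\<close> by simp
    moreover have "s (Suc j) \<in> D n" using s(4)[of j] unfolding j_def by simp
    ultimately show ?thesis using s(5) by blast
  qed
  show thesis
  proof
    show "x < \<alpha>" using s(5)[of 0] s(2) by simp
    show "cofinal_in (range s) \<alpha>"
      unfolding cofinal_in_def
    proof (intro conjI allI impI)
      show "range s \<subseteq> {..<\<alpha>}" using s(5) by auto
      fix \<beta> assume "\<beta> < \<alpha>"
      then obtain k where "\<beta> < s k" using s(6) by blast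
      thus "\<exists>a\<in>range s. \<beta> \<le> a" using less_imp_le by blast
    qed
    show "\<alpha> \<in> acc (D n)" for n
    proof -
      obtain c where "c \<in> D n" "c < \<alpha>" using visits \<open>x < \<alpha>\<close> by blast
      hence "\<alpha> \<in> D n" using club_in_closed[OF D s(1)] visits by blast
      thus ?thesis unfolding acc_def using visits by blast
    qed
  qed
qed

definition diagonal_intersection :: "'a::wellorder \<Rightarrow> ('a \<Rightarrow> 'a set) \<Rightarrow> 'a set" where
  "diagonal_intersection \<delta> E = {\<alpha>. \<alpha> < \<delta> \<and> (\<forall>\<nu><\<alpha>. \<alpha> \<in> E \<nu>)}"

lemma diagonal_intersection_closed:
  fixes \<delta> :: "'a::wellorder"
  assumes E: "\<And>\<nu>. \<nu> < \<delta> \<Longrightarrow> club_in (E \<nu>) \<delta>"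
    and "\<beta> < \<delta>" "c \<in> diagonal_intersection \<delta> E" "c < \<beta>"
    and lim: "\<forall>\<gamma><\<beta>. \<exists>c\<in>diagonal_intersection \<delta> E. \<gamma> < c \<and> c < \<beta>"
  shows "\<beta> \<in> diagonal_intersection \<delta> E"
  unfolding diagonal_intersection_def
proof (intro CollectI conjI allI impI)
  show "\<beta> < \<delta>" by fact
  fix \<nu> assume "\<nu> < \<beta>"
  have E_lim: "\<exists>c\<in>E \<nu>. \<gamma> < c \<and> c < \<beta>" if "\<gamma> < \<beta>" for \<gamma>
  proof -
    obtain c where "c \<in> diagonal_intersection \<delta> E" "max \<gamma> \<nu> < c" "c < \<beta>"
      using lim \<open>\<gamma> < \<beta>\<close> \<open>\<nu> < \<beta>\<close> by (metis max_less_iff_conj)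
    thus ?thesis unfolding diagonal_intersection_def by auto
  qed
  then obtain c where "c \<in> E \<nu>" "c < \<beta>" using \<open>\<nu> < \<beta>\<close> by blast
  thus "\<beta> \<in> E \<nu>"
    using club_in_closed[OF E \<open>\<beta> < \<delta>\<close>] E_lim \<open>\<nu> < \<beta>\<close> \<open>\<beta> < \<delta>\<close> by (meson less_trans)
qed

lemma clubs_next_points_bounded:
  fixes \<delta> :: "'a::wellorder"
  assumes rc: "regular_uncountable_cardinal \<delta>" and E: "\<And>\<nu>. \<nu> < \<delta> \<Longrightarrow> club_in (E \<nu>) \<delta>"
    and "y < \<delta>"
  shows "\<exists>z<\<delta>. y < z \<and> (\<forall>\<nu><y. \<exists>e\<in>E \<nu>. y < e \<and> e \<le> z)"
proof -
  define h where "h \<nu> = (LEAST e. e \<in> E \<nu> \<and> y < e)" for \<nu>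
  have h: "h \<nu> \<in> E \<nu> \<and> y < h \<nu> \<and> h \<nu> < \<delta>" if "\<nu> < y" for \<nu>
  proof -
    have "\<nu> < \<delta>" using \<open>\<nu> < y\<close> \<open>y < \<delta>\<close> by simp
    then obtain c where "c \<in> E \<nu> \<and> y < c" using club_in_unbounded[OF E] \<open>y < \<delta>\<close> by blast
    hence "h \<nu> \<in> E \<nu> \<and> y < h \<nu>" unfolding h_def by (rule LeastI)
    thus ?thesis using club_in_bounded[OF E[OF \<open>\<nu> < \<delta>\<close>]] by blast
  qed
  obtain \<beta> where "\<beta> < \<delta>" "\<forall>\<nu><y. h \<nu> < \<beta>"
    using regular_cardinal_bounded_image[of \<delta> y h] rc \<open>y < \<delta>\<close> h
    unfolding regular_uncountable_cardinal_def by blast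
  moreover obtain y' where "y' < \<delta>" "y < y'"
    using uncountable_cof_unbounded[OF regular_uncountable_cardinal_uncountable_cof[OF rc] \<open>y < \<delta>\<close>]
    by blast
  ultimately show ?thesis
  proof (intro exI[of _ "max \<beta> y'"] conjI allI impI)
    fix \<nu> assume "\<nu> < y"
    thus "\<exists>e\<in>E \<nu>. y < e \<and> e \<le> max \<beta> y'"
      using h \<open>\<forall>\<nu><y. h \<nu> < \<beta>\<close> by (intro bexI[of _ "h \<nu>"]) (auto simp: le_max_iff_disj less_imp_le)
  qed (simp_all add: less_max_iff_disj)
qed

lemma diagonal_intersection_unbounded:
  fixes \<delta> :: "'a::wellorder"
  assumes rc: "regular_uncountable_cardinal \<delta>" and E: "\<And>\<nu>. \<nu> < \<delta> \<Longrightarrow> club_in (E \<nu>) \<delta>"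
    and "x < \<delta>"
  shows "\<exists>\<alpha>\<in>diagonal_intersection \<delta> E. x < \<alpha>"
proof -
  note step = clubs_next_points_bounded[where E = E, OF rc E]
  obtain \<alpha> and s :: "nat \<Rightarrow> 'a" where s: "\<alpha> < \<delta>" "s 0 = x"
    "\<And>k. \<forall>\<nu><s k. \<exists>e\<in>E \<nu>. s k < e \<and> e \<le> s (Suc k)" "\<And>k. s k < \<alpha>" "\<And>\<beta>. \<beta> < \<alpha> \<Longrightarrow> \<exists>k. \<beta> < s k"
    using uncountable_cof_chain_limit[where R = "\<lambda>k y z. \<forall>\<nu><y. \<exists>e\<in>E \<nu>. y < e \<and> e \<le> z",
        OF regular_uncountable_cardinal_uncountable_cof[OF rc] \<open>x < \<delta>\<close> step] by blast
  have "\<alpha> \<in> E \<nu>" if "\<nu> < \<alpha>" for \<nu>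
  proof -
    have E_lim: "\<exists>e\<in>E \<nu>. \<gamma> < e \<and> e < \<alpha>" if "\<gamma> < \<alpha>" for \<gamma>
    proof -
      obtain k where "max \<gamma> \<nu> < s k" using s(5) \<open>\<gamma> < \<alpha>\<close> \<open>\<nu> < \<alpha>\<close> by (metis max_less_iff_conj)
      then obtain e where "e \<in> E \<nu>" "s k < e" "e \<le> s (Suc k)" using s(3)[of k] by auto
      moreover from this have "\<gamma> < e" using \<open>max \<gamma> \<nu> < s k\<close> by (meson less_trans max_less_iff_conj)
      moreover have "e < \<alpha>" using \<open>e \<le> s (Suc k)\<close> s(4)[of "Suc k"] by simp
      ultimately show ?thesis by blast
    qed
    have "\<nu> < \<delta>" using \<open>\<nu> < \<alpha>\<close> s(1) by simp
    moreover obtain e where "e \<in> E \<nu>" "e < \<alpha>" using E_lim \<open>\<nu> < \<alpha>\<close> by blast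
    ultimately show ?thesis using club_in_closed[OF E s(1)] E_lim by blast
  qed
  moreover have "x < \<alpha>" using s(2) s(4)[of 0] by simp
  ultimately show ?thesis using s(1) unfolding diagonal_intersection_def by blast
qed

lemma club_in_diagonal_intersection:
  fixes \<delta> :: "'a::wellorder"
  assumes "regular_uncountable_cardinal \<delta>" "\<And>\<nu>. \<nu> < \<delta> \<Longrightarrow> club_in (E \<nu>) \<delta>"
  shows "club_in (diagonal_intersection \<delta> E) \<delta>"
  unfolding club_in_def
proof (intro conjI allI impI)
  show "diagonal_intersection \<delta> E \<subseteq> {..<\<delta>}" unfolding diagonal_intersection_def by auto
  show "\<exists>c\<in>diagonal_intersection \<delta> E. \<gamma> < c" if "\<gamma> < \<delta>" for \<gamma>
    using diagonal_intersection_unbounded[where E = E, OF assms that] .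
  show "\<beta> \<in> diagonal_intersection \<delta> E"
    if "\<beta> < \<delta>" "(\<exists>c\<in>diagonal_intersection \<delta> E. c < \<beta>) \<and>
      (\<forall>\<gamma><\<beta>. \<exists>c\<in>diagonal_intersection \<delta> E. \<gamma> < c \<and> c < \<beta>)" for \<beta>
    using diagonal_intersection_closed[where E = E, OF assms(2) \<open>\<beta> < \<delta>\<close>] that(2) by blast
qed

theorem fodor:
  fixes \<delta> :: "'a::wellorder"
  assumes rc: "regular_uncountable_cardinal \<delta>" and X: "stationary_in X \<delta>"
    and regressive: "\<And>\<alpha>. \<alpha> \<in> X \<Longrightarrow> f \<alpha> < \<alpha>"
  shows "\<exists>\<nu><\<delta>. stationary_in {\<alpha>\<in>X. f \<alpha> = \<nu>} \<delta>"
proof (rule ccontr)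
  assume "\<not> ?thesis"
  hence "\<forall>\<nu>. \<exists>E. \<nu> < \<delta> \<longrightarrow> club_in E \<delta> \<and> {\<alpha>\<in>X. f \<alpha> = \<nu>} \<inter> E = {}"
    unfolding stationary_in_def by blast
  then obtain E where E: "\<And>\<nu>. \<nu> < \<delta> \<Longrightarrow> club_in (E \<nu>) \<delta> \<and> {\<alpha>\<in>X. f \<alpha> = \<nu>} \<inter> E \<nu> = {}"
    by metis
  then obtain \<alpha> where "\<alpha> \<in> X" "\<alpha> \<in> diagonal_intersection \<delta> E"
    using X club_in_diagonal_intersection[OF rc, of E] unfolding stationary_in_def by blast
  moreover from this have "\<alpha> \<in> E (f \<alpha>)" "f \<alpha> < \<delta>"
    using regressive[OF \<open>\<alpha> \<in> X\<close>] unfolding diagonal_intersection_def by auto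
  ultimately show False using E by blast
qed

subsection \<open>Solovay's splitting theorem\<close>

definition countable_cof_below :: "'a::wellorder \<Rightarrow> 'a set" where
  "countable_cof_below \<delta> = {\<alpha>. \<alpha> < \<delta> \<and> (\<exists>s::nat \<Rightarrow> 'a. cofinal_in (range s) \<alpha>)}"

lemma ladder_coordinate_stationary:
  fixes \<delta> :: "'a::wellorder" and a :: "'a \<Rightarrow> nat \<Rightarrow> 'a"
  assumes cof: "uncountable_cof \<delta>"
    and ladder: "\<And>\<alpha>. \<alpha> \<in> countable_cof_below \<delta> \<Longrightarrow> cofinal_in (range (a \<alpha>)) \<alpha>"
  shows "\<exists>n. \<forall>\<zeta><\<delta>. stationary_in {\<alpha>\<in>countable_cof_below \<delta>. \<zeta> \<le> a \<alpha> n} \<delta>"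
proof (rule ccontr)
  assume "\<not> ?thesis"
  hence "\<forall>n. \<exists>\<zeta>. \<zeta> < \<delta> \<and> (\<exists>D. club_in D \<delta> \<and> {\<alpha>\<in>countable_cof_below \<delta>. \<zeta> \<le> a \<alpha> n} \<inter> D = {})"
    unfolding stationary_in_def by blast
  then obtain \<zeta> where "\<forall>n. \<zeta> n < \<delta> \<and>
      (\<exists>D. club_in D \<delta> \<and> {\<alpha>\<in>countable_cof_below \<delta>. \<zeta> n \<le> a \<alpha> n} \<inter> D = {})"
    by metis
  then obtain D where \<zeta>: "\<And>n. \<zeta> n < \<delta>" and D: "\<And>n. club_in (D n) \<delta>"
    and avoid: "\<And>n. {\<alpha>\<in>countable_cof_below \<delta>. \<zeta> n \<le> a \<alpha> n} \<inter> D n = {}"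
    by metis
  have "countable (range \<zeta>)" "range \<zeta> \<subseteq> {..<\<delta>}" using \<zeta> by auto
  then obtain \<beta> where "\<beta> < \<delta>" "\<forall>n. \<zeta> n < \<beta>"
    using cof[unfolded uncountable_cof_def, rule_format, of "range \<zeta>"] by auto
  then obtain \<alpha> and s :: "nat \<Rightarrow> 'a" where "\<beta> < \<alpha>" "cofinal_in (range s) \<alpha>" "\<And>n. \<alpha> \<in> acc (D n)"
    using countable_clubs_common_acc[where D = D, OF cof D \<open>\<beta> < \<delta>\<close>] by blast
  moreover from this have "\<alpha> < \<delta>" using club_in_bounded[OF D] unfolding acc_def by blast
  ultimately have "\<alpha> \<in> countable_cof_below \<delta>" and "\<forall>n. \<alpha> \<in> D n"
    unfolding countable_cof_below_def acc_def by blast+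
  hence "\<not> \<zeta> n \<le> a \<alpha> n" for n using avoid[of n] by blast
  hence "a \<alpha> n < \<beta>" for n using \<open>\<forall>n. \<zeta> n < \<beta>\<close> by (meson not_le less_trans)
  moreover obtain k where "\<beta> \<le> a \<alpha> k"
    using ladder[OF \<open>\<alpha> \<in> countable_cof_below \<delta>\<close>] \<open>\<beta> < \<alpha>\<close> unfolding cofinal_in_def by blast
  ultimately show False using leD by blast
qed

lemma stationary_fibres_cofinal:
  fixes \<delta> :: "'a::wellorder"
  assumes rc: "regular_uncountable_cardinal \<delta>"
    and regressive: "\<And>\<alpha>. \<alpha> \<in> X \<Longrightarrow> f \<alpha> < \<alpha>"
    and upper: "\<And>\<zeta>. \<zeta> < \<delta> \<Longrightarrow> stationary_in {\<alpha>\<in>X. \<zeta> \<le> f \<alpha>} \<delta>"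
  shows "cofinal_in {\<nu>. \<nu> < \<delta> \<and> stationary_in {\<alpha>\<in>X. f \<alpha> = \<nu>} \<delta>} \<delta>"
  unfolding cofinal_in_def
proof (intro conjI allI impI)
  show "{\<nu>. \<nu> < \<delta> \<and> stationary_in {\<alpha>\<in>X. f \<alpha> = \<nu>} \<delta>} \<subseteq> {..<\<delta>}" by auto
  fix \<zeta> assume "\<zeta> < \<delta>"
  obtain \<nu> where "\<nu> < \<delta>" and \<nu>: "stationary_in {\<alpha>\<in>{\<alpha>\<in>X. \<zeta> \<le> f \<alpha>}. f \<alpha> = \<nu>} \<delta>"
    using fodor[OF rc upper[OF \<open>\<zeta> < \<delta>\<close>]] regressive by auto
  obtain \<alpha> where "\<alpha> \<in> X" "\<zeta> \<le> f \<alpha>" "f \<alpha> = \<nu>"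
    using stationary_in_nonempty[OF regular_uncountable_cardinal_uncountable_cof[OF rc] \<nu>] by blast
  moreover have "stationary_in {\<alpha>\<in>X. f \<alpha> = \<nu>} \<delta>" using \<nu> by (rule stationary_in_mono) blast
  ultimately show "\<exists>\<nu>'\<in>{\<nu>. \<nu> < \<delta> \<and> stationary_in {\<alpha>\<in>X. f \<alpha> = \<nu>} \<delta>}. \<zeta> \<le> \<nu>'"
    using \<open>\<nu> < \<delta>\<close> by blast
qed

theorem solovay_splitting:
  fixes \<delta> :: "'a::wellorder"
  assumes rc: "regular_uncountable_cardinal \<delta>"
  shows "\<exists>P::'a \<Rightarrow> 'a. \<forall>\<gamma><\<delta>. stationary_in {\<xi>. \<xi> < \<delta> \<and> P \<xi> = \<gamma>} \<delta>"
proof -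
  define T where "T = countable_cof_below \<delta>"
  define a where "a \<alpha> = (SOME s::nat \<Rightarrow> 'a. cofinal_in (range s) \<alpha>)" for \<alpha>
  have ladder: "cofinal_in (range (a \<alpha>)) \<alpha>" if \<alpha>: "\<alpha> \<in> T" for \<alpha>
  proof -
    obtain s :: "nat \<Rightarrow> 'a" where "cofinal_in (range s) \<alpha>"
      using \<alpha> unfolding T_def countable_cof_below_def by blast
    thus ?thesis unfolding a_def by (rule someI[where P = "\<lambda>s. cofinal_in (range s) \<alpha>"])
  qed
  obtain n where n: "\<And>\<zeta>. \<zeta> < \<delta> \<Longrightarrow> stationary_in {\<alpha>\<in>T. \<zeta> \<le> a \<alpha> n} \<delta>"
    using ladder_coordinate_stationary[OF regular_uncountable_cardinal_uncountable_cof[OF rc],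
        of a, folded T_def, OF ladder] by blast
  have regressive: "a \<alpha> n < \<alpha>" if "\<alpha> \<in> T" for \<alpha>
    using ladder[OF that] unfolding cofinal_in_def by blast
  define N where "N = {\<nu>. \<nu> < \<delta> \<and> stationary_in {\<alpha>\<in>T. a \<alpha> n = \<nu>} \<delta>}"
  have "cofinal_in N \<delta>" unfolding N_def using stationary_fibres_cofinal[OF rc regressive n] .
  hence "otp_eq N \<delta>"
    using cof_eq_self_otp_eq[of \<delta> N] rc unfolding regular_uncountable_cardinal_def by blast
  then obtain e where e: "bij_betw e N {..<\<delta>}" unfolding otp_eq_def by (elim exE conjE)
  define P where "P \<xi> = (if \<xi> \<in> T \<and> a \<xi> n \<in> N then e (a \<xi> n) else \<delta>)" for \<xi>
  have "stationary_in {\<xi>. \<xi> < \<delta> \<and> P \<xi> = \<gamma>} \<delta>" if "\<gamma> < \<delta>" for \<gamma>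
  proof -
    have "\<gamma> \<in> e ` N" using e \<open>\<gamma> < \<delta>\<close> unfolding bij_betw_def by simp
    then obtain \<nu> where "\<nu> \<in> N" "e \<nu> = \<gamma>" by blast
    hence "{\<alpha>\<in>T. a \<alpha> n = \<nu>} \<subseteq> {\<xi>. \<xi> < \<delta> \<and> P \<xi> = \<gamma>}"
      by (auto simp: P_def T_def countable_cof_below_def)
    with \<open>\<nu> \<in> N\<close> show ?thesis unfolding N_def using stationary_in_mono by blast
  qed
  thus ?thesis by blast
qed

subsection \<open>Transferring stationarity along collapses\<close>

lemma collapse_limit_point:
  fixes C K :: "'a::wellorder set" and f :: "'a \<Rightarrow> 'a"
  assumes C: "club_in C \<eta>" and f: "bij_betw f C {..<\<epsilon>}" "strict_mono_on C f" and "K \<subseteq> C"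
    and "\<xi> < \<epsilon>" "e0 \<in> f ` K" "e0 < \<xi>" and lim: "\<forall>\<gamma><\<xi>. \<exists>e\<in>f ` K. \<gamma> < e \<and> e < \<xi>"
  obtains c \<beta>0 where "c \<in> acc C" "\<xi> = f c" "\<beta>0 \<in> K" "\<beta>0 < c"
    "\<And>y. y < c \<Longrightarrow> \<exists>\<beta>\<in>K. y < \<beta> \<and> \<beta> < c"
proof -
  have less_iff: "f c < f c' \<longleftrightarrow> c < c'" if "c \<in> C" "c' \<in> C" for c c'
    using strict_mono_on_less[OF f(2) that] .
  have "\<xi> \<in> f ` C" using f(1) \<open>\<xi> < \<epsilon>\<close> by (simp add: bij_betw_def)
  then obtain c where c: "c \<in> C" "\<xi> = f c" by blast
  obtain \<beta>0 where "\<beta>0 \<in> K" "f \<beta>0 < f c" using \<open>e0 \<in> f ` K\<close> \<open>e0 < \<xi>\<close> c by blast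
  hence "\<beta>0 < c" using \<open>K \<subseteq> C\<close> c less_iff by blast
  have between: "\<exists>\<beta>\<in>K. c' < \<beta> \<and> \<beta> < c" if c': "c' \<in> C" "c' < c" for c'
  proof -
    have "f c' < \<xi>" using c' c less_iff by blast
    then obtain \<beta> where "\<beta> \<in> K" "f c' < f \<beta>" "f \<beta> < f c" using lim c by blast
    thus ?thesis using \<open>K \<subseteq> C\<close> c' c less_iff by blast
  qed
  have "c \<in> acc C"
    using club_in_acc_if_no_max_below[OF C c(1) _ \<open>\<beta>0 < c\<close>] \<open>\<beta>0 \<in> K\<close> \<open>K \<subseteq> C\<close> between by blast
  moreover have "\<exists>\<beta>\<in>K. y < \<beta> \<and> \<beta> < c" if "y < c" for y
  proof -
    obtain c' where "c' \<in> C" "y < c'" "c' < c" using \<open>c \<in> acc C\<close> \<open>y < c\<close> unfolding acc_def by blast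
    thus ?thesis using between by (meson less_trans)
  qed
  ultimately show thesis using that c(2) \<open>\<beta>0 \<in> K\<close> \<open>\<beta>0 < c\<close> by blast
qed

lemma club_in_collapse_image:
  fixes \<eta> :: "'a::wellorder" and f :: "'a \<Rightarrow> 'a"
  assumes cof: "uncountable_cof \<eta>" and C: "club_in C \<eta>"
    and f: "bij_betw f C {..<\<epsilon>}" "strict_mono_on C f"
    and D: "club_in D \<eta>" and "b < \<eta>"
  shows "club_in (f ` {\<beta>\<in>acc C. \<beta> \<in> D \<and> b < \<beta>}) \<epsilon>"
proof -
  define K where "K = {\<beta>\<in>acc C. \<beta> \<in> D \<and> b < \<beta>}"
  have K: "\<beta> \<in> C" "\<beta> \<in> D" "b < \<beta>" if "\<beta> \<in> K" for \<beta>
    using that unfolding K_def acc_def by auto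
  have img: "f ` C = {..<\<epsilon>}" using f(1) by (simp add: bij_betw_def)
  have unbounded: "\<exists>e\<in>f ` K. \<gamma> < e" if \<gamma>: "\<gamma> < \<epsilon>" for \<gamma>
  proof -
    obtain c where c: "c \<in> C" "\<gamma> = f c" using img \<gamma> by (metis imageE lessThan_iff)
    have "max c b < \<eta>" using club_in_bounded[OF C c(1)] \<open>b < \<eta>\<close> by simp
    moreover have "club_in (if n = 0 then D else C) \<eta>" for n :: nat using C D by simp
    ultimately obtain \<alpha> where "max c b < \<alpha>" "\<And>n::nat. \<alpha> \<in> acc (if n = 0 then D else C)"
      using countable_clubs_common_acc[where D = "\<lambda>n. if n = 0 then D else C", OF cof] by blast
    from this(2)[of 0] this(2)[of 1] have "\<alpha> \<in> D" "\<alpha> \<in> acc C" unfolding acc_def by auto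
    hence "\<alpha> \<in> K" "c < \<alpha>" using \<open>max c b < \<alpha>\<close> unfolding K_def by auto
    moreover from this have "\<gamma> < f \<alpha>" using c K strict_mono_on_less[OF f(2)] by blast
    ultimately show ?thesis by blast
  qed
  have closed: "\<xi> \<in> f ` K"
    if limit: "\<xi> < \<epsilon>" "e0 \<in> f ` K" "e0 < \<xi>" "\<forall>\<gamma><\<xi>. \<exists>e\<in>f ` K. \<gamma> < e \<and> e < \<xi>"
    for \<xi> e0
  proof -
    have "K \<subseteq> C" using K by blast
    obtain c \<beta>0 where c: "c \<in> acc C" "\<xi> = f c" and "\<beta>0 \<in> K" "\<beta>0 < c"
      and K_lim: "\<And>y. y < c \<Longrightarrow> \<exists>\<beta>\<in>K. y < \<beta> \<and> \<beta> < c"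
      using collapse_limit_point[OF C f \<open>K \<subseteq> C\<close> limit] by blast
    have "c < \<eta>" using c(1) club_in_bounded[OF C] unfolding acc_def by blast
    hence "c \<in> D" using club_in_closed[OF D _ K(2)[OF \<open>\<beta>0 \<in> K\<close>] \<open>\<beta>0 < c\<close>] K_lim K(2) by blast
    moreover have "b < c" using K(3)[OF \<open>\<beta>0 \<in> K\<close>] \<open>\<beta>0 < c\<close> by simp
    ultimately have "c \<in> K" using c(1) unfolding K_def by blast
    thus ?thesis using c(2) by blast
  qed
  show ?thesis
    unfolding K_def[symmetric] club_in_def
  proof (intro conjI allI impI)
    show "f ` K \<subseteq> {..<\<epsilon>}" using K img by blast
  qed (use unbounded closed in blast)+
qed

lemma stationary_in_collapse_preimage:
  fixes \<eta> :: "'a::wellorder" and f :: "'a \<Rightarrow> 'a"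
  assumes cof: "uncountable_cof \<eta>" and C: "club_in C \<eta>"
    and f: "bij_betw f C {..<\<epsilon>}" "strict_mono_on C f"
    and T: "stationary_in T \<epsilon>" and "b < \<eta>"
  shows "stationary_in {\<beta>\<in>acc C. b < \<beta> \<and> f \<beta> \<in> T} \<eta>"
  unfolding stationary_in_def
proof (intro allI impI)
  fix D assume "club_in D \<eta>"
  from club_in_collapse_image[OF cof C f this \<open>b < \<eta>\<close>]
  obtain \<xi> where "\<xi> \<in> T" "\<xi> \<in> f ` {\<beta>\<in>acc C. \<beta> \<in> D \<and> b < \<beta>}"
    using T unfolding stationary_in_def by blast
  thus "{\<beta>\<in>acc C. b < \<beta> \<and> f \<beta> \<in> T} \<inter> D \<noteq> {}" by blast
qed

lemma stationary_colouring_by_collapses: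
  fixes \<delta> :: "'a::wellorder" and g :: "'a \<Rightarrow> 'a"
  assumes rc: "regular_uncountable_cardinal \<delta>"
    and base: "\<forall>\<gamma><\<delta>. stationary_in {\<beta>. \<beta> < \<delta> \<and> g \<beta> = \<gamma>} \<delta>"
    and collapse: "\<And>\<eta>. cof_eq \<eta> \<delta> \<Longrightarrow> \<delta> < \<eta> \<Longrightarrow> \<exists>C \<epsilon> f. \<epsilon> < \<eta> \<and> club_in C \<eta> \<and>
       bij_betw f C {..<\<epsilon>} \<and> strict_mono_on C f \<and> (\<forall>\<beta>\<in>acc C. \<delta> < \<beta> \<longrightarrow> g \<beta> = g (f \<beta>))"
  shows "cof_eq \<eta> \<delta> \<Longrightarrow> \<gamma> < \<delta> \<Longrightarrow> stationary_in {\<beta>. \<beta> < \<eta> \<and> g \<beta> = \<gamma>} \<eta>"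
proof (induction \<eta> rule: less_induct)
  case (less \<eta>)
  consider "\<eta> = \<delta>" | "\<delta> < \<eta>" using cof_eq_le[OF less.prems(1)] by fastforce
  thus ?case
  proof cases
    case 1
    thus ?thesis using base less.prems(2) by simp
  next
    case 2
    then obtain C \<epsilon> f where "\<epsilon> < \<eta>" and C: "club_in C \<eta>"
      and f: "bij_betw f C {..<\<epsilon>}" "strict_mono_on C f"
      and coherent: "\<forall>\<beta>\<in>acc C. \<delta> < \<beta> \<longrightarrow> g \<beta> = g (f \<beta>)"
      using collapse[OF less.prems(1)] by blast
    have "cof_eq \<epsilon> \<delta>" using cof_eq_transfer[OF less.prems(1) club_in_cofinal_in[OF C] f] .
    hence "stationary_in {\<xi>. \<xi> < \<epsilon> \<and> g \<xi> = \<gamma>} \<epsilon>" using less.IH[OF \<open>\<epsilon> < \<eta>\<close>] less.prems(2) by blast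
    moreover have "uncountable_cof \<eta>"
      using cof_eq_uncountable_cof[OF less.prems(1)] rc unfolding regular_uncountable_cardinal_def by blast
    ultimately have "stationary_in {\<beta>\<in>acc C. \<delta> < \<beta> \<and> f \<beta> \<in> {\<xi>. \<xi> < \<epsilon> \<and> g \<xi> = \<gamma>}} \<eta>"
      using stationary_in_collapse_preimage[OF _ C f _ \<open>\<delta> < \<eta>\<close>] by blast
    moreover have "{\<beta>\<in>acc C. \<delta> < \<beta> \<and> f \<beta> \<in> {\<xi>. \<xi> < \<epsilon> \<and> g \<xi> = \<gamma>}} \<subseteq> {\<beta>. \<beta> < \<eta> \<and> g \<beta> = \<gamma>}"
      using coherent club_in_bounded[OF C] unfolding acc_def by auto
    ultimately show ?thesis by (rule stationary_in_mono)
  qed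
qed

lemma partial_global_square_coherent_collapses:
  fixes \<delta> :: "'a::wellorder"
  assumes "partial_global_square \<delta>"
  obtains S and ot :: "'a \<Rightarrow> 'a"
  where "\<And>\<eta>. cof_eq \<eta> \<delta> \<Longrightarrow> \<eta> \<in> S" "\<And>\<beta>. \<beta> \<in> S \<Longrightarrow> \<delta> < \<beta> \<Longrightarrow> ot \<beta> < \<beta>"
    "\<And>\<eta>. \<eta> \<in> S \<Longrightarrow> \<delta> < \<eta> \<Longrightarrow> \<exists>C \<epsilon> f. \<epsilon> < \<eta> \<and> club_in C \<eta> \<and>
       bij_betw f C {..<\<epsilon>} \<and> strict_mono_on C f \<and> (\<forall>\<beta>\<in>acc C. \<delta> < \<beta> \<longrightarrow> \<beta> \<in> S \<and> ot \<beta> = f \<beta>)"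
proof -
  obtain S C where S: "\<And>\<alpha>. cof_eq \<alpha> \<delta> \<Longrightarrow> \<alpha> \<in> S"
    and C: "\<And>\<alpha>. \<alpha> \<in> S \<Longrightarrow> \<delta> < \<alpha> \<Longrightarrow> club_in (C \<alpha>) \<alpha> \<and> otp_less (C \<alpha>) \<alpha> \<and> acc (C \<alpha>) \<subseteq> S \<and>
          (\<forall>\<beta>\<in>acc (C \<alpha>). \<delta> < \<beta> \<longrightarrow> C \<alpha> \<inter> {..<\<beta>} = C \<beta>)"
    using assms unfolding partial_global_square_def by blast
  define ot where "ot \<beta> = (SOME \<gamma>. otp_eq (C \<beta>) \<gamma>)" for \<beta>
  have ot: "otp_eq (C \<beta>) (ot \<beta>) \<and> ot \<beta> < \<beta>" if \<beta>: "\<beta> \<in> S" "\<delta> < \<beta>" for \<beta>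
  proof -
    obtain \<gamma> where "\<gamma> < \<beta>" "otp_eq (C \<beta>) \<gamma>" using C[OF \<beta>] unfolding otp_less_def by blast
    moreover from \<open>otp_eq (C \<beta>) \<gamma>\<close> have "otp_eq (C \<beta>) (ot \<beta>)"
      unfolding ot_def by (rule someI)
    ultimately show ?thesis using otp_eq_unique by blast
  qed
  have "\<exists>C \<epsilon> f. \<epsilon> < \<eta> \<and> club_in C \<eta> \<and> bij_betw f C {..<\<epsilon>} \<and> strict_mono_on C f \<and>
      (\<forall>\<beta>\<in>acc C. \<delta> < \<beta> \<longrightarrow> \<beta> \<in> S \<and> ot \<beta> = f \<beta>)" if \<eta>: "\<eta> \<in> S" "\<delta> < \<eta>" for \<eta>
  proof -
    have sq: "club_in (C \<eta>) \<eta>" "otp_less (C \<eta>) \<eta>" "acc (C \<eta>) \<subseteq> S"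
      "\<forall>\<beta>\<in>acc (C \<eta>). \<delta> < \<beta> \<longrightarrow> C \<eta> \<inter> {..<\<beta>} = C \<beta>"
      using C[OF \<eta>] by auto
    then obtain \<epsilon> f where "\<epsilon> < \<eta>" and f: "bij_betw f (C \<eta>) {..<\<epsilon>}" "strict_mono_on (C \<eta>) f"
      unfolding otp_less_def otp_eq_def by blast
    have "\<beta> \<in> S \<and> ot \<beta> = f \<beta>" if \<beta>: "\<beta> \<in> acc (C \<eta>)" "\<delta> < \<beta>" for \<beta>
    proof -
      have "\<beta> \<in> S" "\<beta> \<in> C \<eta>" using sq(3) \<beta>(1) unfolding acc_def by auto
      hence "otp_eq (C \<beta>) (f \<beta>)" using otp_eq_initial_segment[OF f] sq(4) \<beta> by metis
      thus ?thesis using ot[OF \<open>\<beta> \<in> S\<close> \<beta>(2)] otp_eq_unique \<open>\<beta> \<in> S\<close> by blast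
    qed
    thus ?thesis using \<open>\<epsilon> < \<eta>\<close> sq(1) f by blast
  qed
  thus thesis using that S ot by blast
qed

theorem partial_global_square_stationary_colouring:
  fixes \<delta> :: "'a::wellorder"
  assumes rc: "regular_uncountable_cardinal \<delta>" and "partial_global_square \<delta>"
  shows "\<exists>g::'a \<Rightarrow> 'a. \<forall>\<eta>. cof_eq \<eta> \<delta> \<longrightarrow> (\<forall>\<gamma><\<delta>. stationary_in {\<beta>. \<beta> < \<eta> \<and> g \<beta> = \<gamma>} \<eta>)"
proof -
  obtain S and ot :: "'a \<Rightarrow> 'a" where S: "\<And>\<eta>. cof_eq \<eta> \<delta> \<Longrightarrow> \<eta> \<in> S"
    and ot: "\<And>\<beta>. \<beta> \<in> S \<Longrightarrow> \<delta> < \<beta> \<Longrightarrow> ot \<beta> < \<beta>"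
    and collapses: "\<And>\<eta>. \<eta> \<in> S \<Longrightarrow> \<delta> < \<eta> \<Longrightarrow> \<exists>C \<epsilon> f. \<epsilon> < \<eta> \<and> club_in C \<eta> \<and>
       bij_betw f C {..<\<epsilon>} \<and> strict_mono_on C f \<and> (\<forall>\<beta>\<in>acc C. \<delta> < \<beta> \<longrightarrow> \<beta> \<in> S \<and> ot \<beta> = f \<beta>)"
    using partial_global_square_coherent_collapses[OF \<open>partial_global_square \<delta>\<close>] by blast
  obtain P :: "'a \<Rightarrow> 'a" where P: "\<forall>\<gamma><\<delta>. stationary_in {\<xi>. \<xi> < \<delta> \<and> P \<xi> = \<gamma>} \<delta>"
    using solovay_splitting[OF rc] by blast
  define g where "g = wfrec {(x, y). x < y}
    (\<lambda>g \<beta>. if \<beta> < \<delta> then P \<beta> else if \<beta> \<in> S \<and> \<delta> < \<beta> \<and> ot \<beta> < \<beta> then g (ot \<beta>) else \<beta>)"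
  have g_eq: "g \<beta> = (if \<beta> < \<delta> then P \<beta> else if \<beta> \<in> S \<and> \<delta> < \<beta> \<and> ot \<beta> < \<beta> then g (ot \<beta>) else \<beta>)"
    for \<beta> unfolding g_def by (subst wfrec[OF wf]) (simp add: cut_apply)
  have "{\<beta>. \<beta> < \<delta> \<and> g \<beta> = \<gamma>} = {\<beta>. \<beta> < \<delta> \<and> P \<beta> = \<gamma>}" for \<gamma>
    using g_eq by auto
  hence base: "\<forall>\<gamma><\<delta>. stationary_in {\<beta>. \<beta> < \<delta> \<and> g \<beta> = \<gamma>} \<delta>" using P by simp
  have g_step: "g \<beta> = g (ot \<beta>)" if "\<beta> \<in> S" "\<delta> < \<beta>" for \<beta>
    using g_eq[of \<beta>] ot[OF that] that leD[OF less_imp_le[OF that(2)]] by simp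
  have "\<exists>C \<epsilon> f. \<epsilon> < \<eta> \<and> club_in C \<eta> \<and> bij_betw f C {..<\<epsilon>} \<and> strict_mono_on C f \<and>
      (\<forall>\<beta>\<in>acc C. \<delta> < \<beta> \<longrightarrow> g \<beta> = g (f \<beta>))" if "cof_eq \<eta> \<delta>" "\<delta> < \<eta>" for \<eta>
    using collapses[OF S[OF that(1)] that(2)] g_step by metis
  thus ?thesis using stationary_colouring_by_collapses[OF rc base] by blast
qed

theorem claim3p3:
  fixes \<delta> :: "'a::wellorder"
  assumes "regular_uncountable_cardinal \<delta>"
    and "partial_global_square \<delta>"
  shows "\<forall>\<mu>. is_cardinal \<mu> \<and> \<delta> < \<mu> \<longrightarrow> pitchfork \<mu> \<delta>"
proof (intro allI impI)
  fix \<mu> :: 'a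
  obtain g :: "'a \<Rightarrow> 'a"
    where g: "\<And>\<eta> \<gamma>. cof_eq \<eta> \<delta> \<Longrightarrow> \<gamma> < \<delta> \<Longrightarrow> stationary_in {\<beta>. \<beta> < \<eta> \<and> g \<beta> = \<gamma>} \<eta>"
    using partial_global_square_stationary_colouring[OF assms] by blast
  \<comment> \<open>the colouring is global, so its colour classes witness the principle at every \<mu>,
    without using that \<mu> is a cardinal above \<delta>\<close>
  show "pitchfork \<mu> \<delta>"
    unfolding pitchfork_def
  proof (intro exI[of _ "\<lambda>\<gamma>. {\<beta>. \<beta> < \<mu> \<and> g \<beta> = \<gamma>}"] conjI allI impI)
    fix \<eta> \<gamma> assume "\<eta> < \<mu>" "cof_eq \<eta> \<delta>" "\<gamma> < \<delta>"
    moreover have "{\<beta>. \<beta> < \<mu> \<and> g \<beta> = \<gamma>} \<inter> {..<\<eta>} = {\<beta>. \<beta> < \<eta> \<and> g \<beta> = \<gamma>}"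
      using \<open>\<eta> < \<mu>\<close> by auto
    ultimately show "stationary_in ({\<beta>. \<beta> < \<mu> \<and> g \<beta> = \<gamma>} \<inter> {..<\<eta>}) \<eta>" using g by simp
  qed auto
qed

end
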